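(* Let $g:\mathbb R\to\mathbb R$ be continuous. Let $\tilde W\in C^2(\mathbb R)$ be nonnegative with $\tilde W(x)=0$ if and only if $x\in\{0,1\}$. For $\varepsilon>0$ define $f_\varepsilon,f_0:\mathcal V\to\mathbb R\cup\{+\infty\}$ by $$f_\varepsilon(u)=\sum_{i\in V}g\big((\Delta u)_i\big)+\frac1\varepsilon\sum_{i\in V}\tilde W(u_i),$$ $$f_0(u)=\begin{cases}\sum_{i\in V}g\big((\kappa^{1,r}_S)_i\big)&\text{if }u=\chi_S\text{ for some }S\subset V,\\+\infty&\text{otherwise.}\end{cases}$$ Then $f_\varepsilon$ $\Gamma$-converges to $f_0$ as $\varepsilon\to0$, with respect to the Euclidean topology on $\mathcal V\cong\mathbb R^n$. That is, for every sequence $\varepsilon_k\to0^+$ the following two conditions hold. First, for every $u\in\mathcal V$ and every sequence $u_k\to u$, $\liminf_k f_{\varepsilon_k}(u_k)\ge f_0(u)$. Second, for every $u\in\mathcal V$ there is a sequence $u_k\to u$ with $\limsup_kf_{\varepsilon_k}(u_k)\le f_0(u)$.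
   Context: $G=(V,E)$ is a finite undirected weighted graph with vertex set $V=\{1,\dots,n\}$. The weights satisfy $\omega_{ij}=\omega_{ji}\ge0$, with $\omega_{ij}>0$ iff $\{i,j\}\in E$, and $\omega_{ii}=0$. The degrees are $d_i=\sum_j\omega_{ij}>0$. Parameters $r\in[0,1]$ and $q\in[1/2,1]$ are fixed. $\mathcal V$ is the space of functions $V\to\mathbb R$, and $\chi_S$ is the indicator of $S\subset V$. The graph Laplacian is $(\Delta u)_i=d_i^{-r}\sum_j\omega_{ij}(u_i-u_j)$. The graph curvature of $S\subset V$ is the function $\kappa^{q,r}_S\in\mathcal V$ given by $(\kappa^{q,r}_S)_i=d_i^{-r}\sum_{j\in V\setminus S}\omega_{ij}^q$ if $i\in S$, and $(\kappa^{q,r}_S)_i=-d_i^{-r}\sum_{j\in S}\omega_{ij}^q$ if $i\notin S$. Here $\omega_{ij}^q:=0$ when $\omega_{ij}=0$. *)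

theory Defs
  imports "HOL-Analysis.Analysis"
begin

text \<open>Vertices are the elements of a finite type 'n (so V = UNIV, n = CARD('n));
  functions V \<rightarrow> R are vectors real^'n with the Euclidean topology.\<close>

definition degree :: "('n::finite \<Rightarrow> 'n \<Rightarrow> real) \<Rightarrow> 'n \<Rightarrow> real" where
  "degree w i = (\<Sum>j\<in>UNIV. w i j)"

definition graph_laplacian ::
  "real \<Rightarrow> ('n::finite \<Rightarrow> 'n \<Rightarrow> real) \<Rightarrow> real^'n \<Rightarrow> real^'n" where
  "graph_laplacian r w u = (\<chi> i. degree w i powr (- r) * (\<Sum>j\<in>UNIV. w i j * (u $ i - u $ j)))"

definition wpow :: "real \<Rightarrow> real \<Rightarrow> real" where
  "wpow q x = (if x = 0 then 0 else x powr q)"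

definition graph_curvature ::
  "real \<Rightarrow> real \<Rightarrow> ('n::finite \<Rightarrow> 'n \<Rightarrow> real) \<Rightarrow> 'n set \<Rightarrow> real^'n" where
  "graph_curvature q r w S = (\<chi> i.
     if i \<in> S then degree w i powr (- r) * (\<Sum>j\<in>UNIV - S. wpow q (w i j))
     else - (degree w i powr (- r) * (\<Sum>j\<in>S. wpow q (w i j))))"

definition indicator_vec :: "'n::finite set \<Rightarrow> real^'n" where
  "indicator_vec S = (\<chi> i. if i \<in> S then 1 else 0)"

definition f_eps ::
  "(real \<Rightarrow> real) \<Rightarrow> (real \<Rightarrow> real) \<Rightarrow> real \<Rightarrow> ('n::finite \<Rightarrow> 'n \<Rightarrow> real) \<Rightarrow> real \<Rightarrow> real^'n \<Rightarrow> ereal" where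
  "f_eps g W r w \<epsilon> u = ereal ((\<Sum>i\<in>UNIV. g (graph_laplacian r w u $ i))
                                 + (1 / \<epsilon>) * (\<Sum>i\<in>UNIV. W (u $ i)))"

definition f_zero ::
  "(real \<Rightarrow> real) \<Rightarrow> real \<Rightarrow> ('n::finite \<Rightarrow> 'n \<Rightarrow> real) \<Rightarrow> real^'n \<Rightarrow> ereal" where
  "f_zero g r w u = (if \<exists>S. u = indicator_vec S
       then ereal (\<Sum>i\<in>UNIV. g (graph_curvature 1 r w (THE S. u = indicator_vec S) $ i))
       else \<infinity>)"

end

theory Submission
  imports Defs
begin

text \<open>The Laplacian is linear, hence continuous, and on indicator vectors it coincides with the
  curvature for q = 1, so the fidelity term g \<circ> \<Delta> passes to the limit along any converging
  sequence.  The double-well term is nonnegative, vanishes exactly on indicator vectors, and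
  away from them it stays bounded below by a positive constant while 1/\<epsilon> blows up.  Hence the
  liminf inequality holds, and constant sequences are recovery sequences.\<close>

lemma indicator_vec_inject [simp]: "indicator_vec S = indicator_vec T \<longleftrightarrow> S = T"
proof
  assume eq: "indicator_vec S = indicator_vec T"
  show "S = T"
  proof (rule set_eqI)
    fix x
    have "indicator_vec S $ x = indicator_vec T $ x" using eq by simp
    then show "x \<in> S \<longleftrightarrow> x \<in> T" by (simp add: indicator_vec_def split: if_splits)
  qed
qed simp

lemma indicator_vec_if_binary:
  assumes "\<And>i. u $ i = 0 \<or> u $ i = 1"
  shows "u = indicator_vec {i. u $ i = 1}"
  using assms by (auto simp: indicator_vec_def vec_eq_iff)

lemma f_zero_indicator_vec:
  "f_zero g r w (indicator_vec S) = ereal (\<Sum>i\<in>UNIV. g (graph_curvature 1 r w S $ i))"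
proof -
  have "(THE T. indicator_vec S = indicator_vec T) = S" by auto
  then show ?thesis by (auto simp: f_zero_def)
qed

lemma graph_laplacian_indicator_vec:
  assumes "\<And>i j. w i j \<ge> 0"
  shows "graph_laplacian r w (indicator_vec S) = graph_curvature 1 r w S"
proof -
  have wpow_1: "wpow 1 (w i j) = w i j" for i j
    using assms[of i j] by (auto simp: wpow_def)
  have outer: "(\<Sum>j\<in>UNIV. w i j * (1 - (if j \<in> S then 1 else 0))) = (\<Sum>j\<in>UNIV - S. w i j)"
    for i by (rule sum.mono_neutral_cong_right) auto
  have inner: "(\<Sum>j\<in>UNIV. - (w i j * (if j \<in> S then 1 else 0))) = - (\<Sum>j\<in>S. w i j)" for i
  proof -
    have "(\<Sum>j\<in>UNIV. - (w i j * (if j \<in> S then 1 else 0)))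
        = - (\<Sum>j\<in>UNIV. (if j \<in> S then w i j else 0))"
      by (simp add: sum_negf[symmetric] if_distrib cong: if_cong)
    also have "(\<Sum>j\<in>UNIV. (if j \<in> S then w i j else 0)) = (\<Sum>j\<in>S. w i j)"
      by (simp add: sum.If_cases)
    finally show ?thesis .
  qed
  show ?thesis
    unfolding graph_laplacian_def graph_curvature_def indicator_vec_def
    by (rule vec_eq_iff[THEN iffD2]) (auto simp: wpow_1 outer inner)
qed

lemma tendsto_graph_laplacian:
  assumes "us \<longlonglongrightarrow> u"
  shows "(\<lambda>k. graph_laplacian r w (us k) $ i) \<longlonglongrightarrow> graph_laplacian r w u $ i"
  unfolding graph_laplacian_def vec_lambda_beta
  by (intro tendsto_intros tendsto_vec_nth assms)

lemma tendsto_sum_graph_laplacian: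
  fixes g :: "real \<Rightarrow> real"
  assumes "continuous_on UNIV g" and "us \<longlonglongrightarrow> u"
  shows "(\<lambda>k. \<Sum>i\<in>UNIV. g (graph_laplacian r w (us k) $ i))
           \<longlonglongrightarrow> (\<Sum>i\<in>UNIV. g (graph_laplacian r w u $ i))"
proof -
  have g_cont: "isCont g x" for x using assms(1) by (simp add: continuous_on_eq_continuous_at)
  have "(\<lambda>k. g (graph_laplacian r w (us k) $ i)) \<longlonglongrightarrow> g (graph_laplacian r w u $ i)" for i
    by (rule isCont_tendsto_compose[OF g_cont tendsto_graph_laplacian[OF assms(2)]])
  then show ?thesis by (rule tendsto_sum)
qed

lemma filterlim_add_divide_at_top:
  fixes a b \<epsilon> :: "nat \<Rightarrow> real"
  assumes "a \<longlonglongrightarrow> A" and "b \<longlonglongrightarrow> B" and "B > 0"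
    and "\<And>k. \<epsilon> k > 0" and "\<epsilon> \<longlonglongrightarrow> 0"
  shows "filterlim (\<lambda>k. a k + (1 / \<epsilon> k) * b k) at_top sequentially"
proof -
  have "filterlim (\<lambda>k. inverse (\<epsilon> k)) at_top sequentially"
    by (rule filterlim_inverse_at_top) (use assms(4,5) in auto)
  then have "filterlim (\<lambda>k. b k * inverse (\<epsilon> k)) at_top sequentially"
    by (rule filterlim_tendsto_pos_mult_at_top[OF assms(2,3)])
  then have "filterlim (\<lambda>k. a k + b k * inverse (\<epsilon> k)) at_top sequentially"
    by (rule filterlim_tendsto_add_at_top[OF assms(1)])
  then show ?thesis by (simp add: divide_inverse mult.commute)
qed

lemma f_eps_liminf_ge_f_zero:
  fixes us :: "nat \<Rightarrow> real^'n::finite"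
  assumes w_nonneg: "\<And>i j. w i j \<ge> 0"
    and g_cont: "continuous_on UNIV g"
    and W_cont: "continuous_on UNIV W"
    and W_nonneg: "\<And>x. W x \<ge> 0"
    and W_zero: "\<And>x. W x = 0 \<longleftrightarrow> x = 0 \<or> x = 1"
    and eps_pos: "\<And>k. \<epsilon> k > 0" and eps_lim: "\<epsilon> \<longlonglongrightarrow> 0"
    and us: "us \<longlonglongrightarrow> u"
  shows "f_zero g r w u \<le> Liminf sequentially (\<lambda>k. f_eps g W r w (\<epsilon> k) (us k))"
proof -
  define G where "G k = (\<Sum>i\<in>UNIV. g (graph_laplacian r w (us k) $ i))" for k
  define G0 where "G0 = (\<Sum>i\<in>UNIV. g (graph_laplacian r w u $ i))"
  define P where "P k = (\<Sum>i\<in>UNIV. W (us k $ i))" for k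
  have G_lim: "G \<longlonglongrightarrow> G0"
    unfolding G_def G0_def using g_cont us by (rule tendsto_sum_graph_laplacian)
  have f_eps_us: "f_eps g W r w (\<epsilon> k) (us k) = ereal (G k + (1 / \<epsilon> k) * P k)" for k
    by (simp add: f_eps_def G_def P_def)
  show ?thesis
  proof (cases "\<exists>S. u = indicator_vec S")
    case True
    then obtain S where S: "u = indicator_vec S" by blast
    have "ereal (G k) \<le> f_eps g W r w (\<epsilon> k) (us k)" for k
      using eps_pos[of k] W_nonneg
      by (simp add: f_eps_us P_def sum_nonneg)
    then have "Liminf sequentially (\<lambda>k. ereal (G k))
        \<le> Liminf sequentially (\<lambda>k. f_eps g W r w (\<epsilon> k) (us k))"
      by (intro Liminf_mono always_eventually) blast
    moreover have "Liminf sequentially (\<lambda>k. ereal (G k)) = ereal G0"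
      by (rule lim_imp_Liminf) (auto intro: G_lim)
    ultimately show ?thesis
      using S by (simp add: f_zero_indicator_vec G0_def graph_laplacian_indicator_vec[where w = w, OF w_nonneg])
  next
    case False
    then obtain i where i: "u $ i \<noteq> 0" "u $ i \<noteq> 1"
      using indicator_vec_if_binary by blast
    define P0 where "P0 = (\<Sum>j\<in>UNIV. W (u $ j))"
    have "W (u $ i) > 0" using W_nonneg[of "u $ i"] W_zero[of "u $ i"] i by auto
    moreover have "W (u $ i) \<le> P0"
      unfolding P0_def by (rule member_le_sum) (auto intro: W_nonneg)
    ultimately have P0_pos: "P0 > 0" by simp
    have W_isCont: "isCont W x" for x using W_cont by (simp add: continuous_on_eq_continuous_at)
    have "P \<longlonglongrightarrow> P0"
      unfolding P_def P0_def by (intro tendsto_sum isCont_tendsto_compose[OF W_isCont] tendsto_vec_nth us)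
    then have "filterlim (\<lambda>k. G k + (1 / \<epsilon> k) * P k) at_top sequentially"
      using G_lim P0_pos eps_pos eps_lim by (intro filterlim_add_divide_at_top) auto
    then have "(\<lambda>k. f_eps g W r w (\<epsilon> k) (us k)) \<longlonglongrightarrow> \<infinity>"
      unfolding tendsto_PInfty f_eps_us filterlim_at_top_dense by simp
    then have "Liminf sequentially (\<lambda>k. f_eps g W r w (\<epsilon> k) (us k)) = \<infinity>"
      by (rule lim_imp_Liminf[rotated]) simp
    then show ?thesis by simp
  qed
qed

lemma f_eps_limsup_const_le_f_zero:
  assumes w_nonneg: "\<And>i j. w i j \<ge> 0" and "W 0 = 0" and "W 1 = 0"
  shows "Limsup sequentially (\<lambda>k. f_eps g W r w (\<epsilon> k) u) \<le> f_zero g r w u"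
proof (cases "\<exists>S. u = indicator_vec S")
  case True
  then obtain S where S: "u = indicator_vec S" by blast
  have "W (u $ i) = 0" for i using assms(2,3) S by (auto simp: indicator_vec_def)
  then have "f_eps g W r w (\<epsilon> k) u = f_zero g r w u" for k
    using S by (simp add: f_eps_def f_zero_indicator_vec graph_laplacian_indicator_vec[where w = w, OF w_nonneg])
  then show ?thesis by (simp add: Limsup_const)
next
  case False
  then show ?thesis by (simp add: f_zero_def)
qed

theorem mainTheorem4:
  fixes w :: "'n::finite \<Rightarrow> 'n \<Rightarrow> real"
    and r q :: real
    and g W :: "real \<Rightarrow> real"
  assumes w_sym: "\<And>i j. w i j = w j i"
    and w_nonneg: "\<And>i j. w i j \<ge> 0"
    and w_diag: "\<And>i. w i i = 0"
    and deg_pos: "\<And>i. degree w i > 0"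
    and r_range: "0 \<le> r" "r \<le> 1"
    and q_range: "1/2 \<le> q" "q \<le> 1"
    and g_cont: "continuous_on UNIV g"
    and W_C2: "\<exists>W' W''. (\<forall>x. (W has_real_derivative W' x) (at x))
                      \<and> (\<forall>x. (W' has_real_derivative W'' x) (at x))
                      \<and> continuous_on UNIV W''"
    and W_nonneg: "\<And>x. W x \<ge> 0"
    and W_zero: "\<And>x. W x = 0 \<longleftrightarrow> x = 0 \<or> x = 1"
  shows "\<forall>\<epsilon> :: nat \<Rightarrow> real. (\<forall>k. \<epsilon> k > 0) \<and> \<epsilon> \<longlonglongrightarrow> 0 \<longrightarrow>
     (\<forall>u (us :: nat \<Rightarrow> real^'n). us \<longlonglongrightarrow> u \<longrightarrow>
          f_zero g r w u \<le> Liminf sequentially (\<lambda>k. f_eps g W r w (\<epsilon> k) (us k)))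
   \<and> (\<forall>u :: real^'n. \<exists>us. us \<longlonglongrightarrow> u \<and>
          Limsup sequentially (\<lambda>k. f_eps g W r w (\<epsilon> k) (us k)) \<le> f_zero g r w u)"
proof -
  obtain W' where "\<And>x. (W has_real_derivative W' x) (at x)" using W_C2 by blast
  then have W_cont: "continuous_on UNIV W"
    by (meson DERIV_isCont continuous_at_imp_continuous_on)
  have W_wells: "W 0 = 0" "W 1 = 0" using W_zero by auto
  show ?thesis
  proof (intro allI impI conjI)
    fix \<epsilon> :: "nat \<Rightarrow> real" and u and us :: "nat \<Rightarrow> real^'n"
    assume "(\<forall>k. \<epsilon> k > 0) \<and> \<epsilon> \<longlonglongrightarrow> 0" and "us \<longlonglongrightarrow> u"
    then show "f_zero g r w u \<le> Liminf sequentially (\<lambda>k. f_eps g W r w (\<epsilon> k) (us k))"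
      using f_eps_liminf_ge_f_zero[where w = w, OF w_nonneg g_cont W_cont W_nonneg W_zero] by blast
  next
    fix \<epsilon> :: "nat \<Rightarrow> real" and u :: "real^'n"
    show "\<exists>us. us \<longlonglongrightarrow> u \<and> Limsup sequentially (\<lambda>k. f_eps g W r w (\<epsilon> k) (us k)) \<le> f_zero g r w u"
      using f_eps_limsup_const_le_f_zero[where w = w, OF w_nonneg W_wells] by (intro exI[of _ "\<lambda>k. u"]) auto
  qed
qed

end
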